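(* Let $\widetilde\Omega\subset Q^{n+2}$ be the set of all $(\mathbf a_0,\dots,\mathbf a_{n+1})$, $\mathbf a_j\in Q$, such that $|\langle\mathbf a_j,\mathbf a_k\rangle-1|<1$ for all $j,k$. Then $\widetilde\Omega$ is pathwise connected.
   Context: $\mathbb C^{n+1}$ carries the bilinear (not Hermitian) form $\langle\mathbf z,\mathbf w\rangle=\sum_{j=0}^nz_jw_j$, and $Q=\{\mathbf z\in\mathbb C^{n+1}:\langle\mathbf z,\mathbf z\rangle=1\}$. *)

theory Defs
  imports "HOL-Analysis.Analysis"
begin

text \<open>Points of C^(n+1) are vectors complex^'n with CARD('n) = n+1.
  The bilinear (non-Hermitian) form.\<close>
definition bform :: "complex ^ 'n \<Rightarrow> complex ^ 'n \<Rightarrow> complex" where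
  "bform z w = (\<Sum>j\<in>UNIV. z $ j * w $ j)"

definition Qset :: "(complex ^ 'n) set" where
  "Qset = {z. bform z z = 1}"

text \<open>Tuples (a_0,...,a_(n+1)) are indexed by a finite type 'm with CARD('m) = CARD('n) + 1.\<close>
definition OmegaT :: "((complex ^ 'n) ^ 'm) set" where
  "OmegaT = {a. (\<forall>j. a $ j \<in> Qset) \<and> (\<forall>j k. cmod (bform (a $ j) (a $ k) - 1) < 1)}"

end

theory Submission
  imports Defs
begin

text \<open>
  Q is path connected: a point x + iy of Q (x, y real) has |x|^2 - |y|^2 = 1 and x . y = 0, so
  shrinking y to 0 while rescaling x stays in Q and ends on the real unit sphere, which is
  connected because n + 1 \<ge> 2.

  For a tuple a in Omega fix b = a_j0 and move every a_j along the Q-normalisation of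
  (1 - t) b + t a_j. Writing A_j for the value of the form on the unnormalised point a_j(t) and C
  for the value on the pair a_j(t), a_k(t), one has
  2 (C - sqrt A_j sqrt A_k) = (sqrt A_j - sqrt A_k)^2 - 2 t^2 (1 - <a_j, a_k>),
  and an elementary estimate gives |sqrt A_j - sqrt A_k|^2 + 2 t^2 \<le> 2 |sqrt A_j| |sqrt A_k|.
  Hence the normalised tuple stays in Omega and joins a to the diagonal tuple (b, ..., b),
  and the diagonal is a continuous image of Q.
\<close>

text \<open>The polynomial core of \<open>segment_root_estimate\<close>, where \<open>k\<close> is the cross weight of a
  segment with end weights \<open>p\<close>, \<open>1 - p\<close> and \<open>g = |d + e| / 2\<close>.\<close>

lemma segment_weight_inequality:
  fixes p g :: real
  assumes p: "0 \<le> p" "p \<le> 1" and g: "0 \<le> g" "g \<le> 1"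
  defines "k \<equiv> 2*p*(1-p)"
  shows "(2*p\<^sup>2 + k\<^sup>2*(1-g\<^sup>2)/(1-k))\<^sup>2 \<le> 4*(1 - 2*k*g + k\<^sup>2*(2*g\<^sup>2-1))"
proof -
  define q where "q = 1 - p"
  define h where "h = 1 - g"
  define s where "s = k\<^sup>2*(1-g\<^sup>2)"
  define r where "r = s/(1-k)"
  have P: "1 - k = p\<^sup>2 + q\<^sup>2" and kP: "1 - k - k = (p - q)\<^sup>2"
    unfolding k_def q_def by (simp_all add: power2_eq_square algebra_simps)
  have k0: "0 \<le> k" unfolding k_def using p by simp
  have k_le: "k \<le> 1 - k" using kP zero_le_power2[of "p - q"] by linarith
  have P0: "0 < 1 - k" using k0 k_le by simp
  have h: "0 \<le> h" "h \<le> 1" using g h_def by auto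
  have s_eq: "s = k\<^sup>2*(h*(2-h))" unfolding s_def h_def by (simp add: power2_eq_square algebra_simps)
  have s0: "0 \<le> s" unfolding s_eq using h by simp
  have "r = k*(h*(2-h)) * (k/(1-k))" unfolding r_def s_eq by (simp add: power2_eq_square)
  also have "\<dots> \<le> k*(h*(2-h))" using k0 h k_le P0 by (intro mult_left_le) auto
  also have "\<dots> \<le> k*(2*h)" using k0 h by (intro mult_left_mono) (auto simp: algebra_simps)
  finally have "r/2 \<le> k*h" by simp
  hence sq: "(r/2)\<^sup>2 \<le> (k*h)\<^sup>2" using s0 P0 unfolding r_def by (intro power_mono) auto
  have "p\<^sup>2*r = s*(p\<^sup>2/(1-k))" unfolding r_def by simp
  also have "\<dots> \<le> s" using s0 P0 P by (intro mult_left_le) simp_all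
  finally have pr: "p\<^sup>2*r \<le> s" .
  have "(p\<^sup>2 + r/2)\<^sup>2 + s = p^4 + p\<^sup>2*r + (r/2)\<^sup>2 + s"
    by (simp add: power2_eq_square power4_eq_xxxx algebra_simps)
  also have "\<dots> \<le> p^4 + 2 * s + (k*h)\<^sup>2" using pr sq by simp
  also have "\<dots> \<le> (1 - k + k*h)\<^sup>2"
  proof -
    have "(1 - k + k*h)\<^sup>2 - (p^4 + 2 * s + (k*h)\<^sup>2)
        = q^4 + 2*k*h*(1 - k - k) + 2*(p*q*(2*h - 1))\<^sup>2"
      unfolding s_eq k_def q_def by (simp add: power2_eq_square power4_eq_xxxx algebra_simps)
    moreover have "0 \<le> 2*k*h*(1 - k - k)" using k0 h k_le by simp
    moreover have "0 \<le> q^4" by simp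
    moreover have "0 \<le> 2*(p*q*(2*h - 1))\<^sup>2" by simp
    ultimately show ?thesis by linarith
  qed
  finally have "(p\<^sup>2 + r/2)\<^sup>2 \<le> (1 - k*g)\<^sup>2 - s" unfolding h_def by (simp add: algebra_simps)
  moreover have "(2*p\<^sup>2 + r)\<^sup>2 = 4*(p\<^sup>2 + r/2)\<^sup>2" by (simp add: power2_eq_square algebra_simps)
  moreover have "(1 - k*g)\<^sup>2 - s = 1 - 2*k*g + k\<^sup>2*(2*g\<^sup>2-1)"
    unfolding s_def by (simp add: power2_eq_square algebra_simps)
  ultimately show ?thesis unfolding r_def s_def by simp
qed

lemma cmod_add_power2: "(cmod (a + b))\<^sup>2 = (cmod a)\<^sup>2 + (cmod b)\<^sup>2 + 2 * Re (a * cnj b)"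
  unfolding cmod_power2 by (simp add: power2_eq_square algebra_simps)

lemma cmod_diff_power2: "(cmod (a - b))\<^sup>2 = (cmod a)\<^sup>2 + (cmod b)\<^sup>2 - 2 * Re (a * cnj b)"
  unfolding cmod_power2 by (simp add: power2_eq_square algebra_simps)

lemma abs_Im_le_Re_if_Re_power2_nonneg:
  assumes "0 \<le> Re a" "0 \<le> Re (a\<^sup>2)"
  shows "\<bar>Im a\<bar> \<le> Re a"
proof -
  have "(Im a)\<^sup>2 \<le> (Re a)\<^sup>2" using assms(2) unfolding Re_power2 by linarith
  thus ?thesis using assms(1) abs_le_square_iff[of "Im a" "Re a"] by linarith
qed

lemma Re_mult_cnj_nonneg_if_Re_power2_nonneg:
  assumes "0 \<le> Re a" "0 \<le> Re (a\<^sup>2)" "0 \<le> Re b" "0 \<le> Re (b\<^sup>2)"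
  shows "0 \<le> Re (a * cnj b)"
proof -
  have "\<bar>Im a * Im b\<bar> \<le> Re a * Re b" unfolding abs_mult
    using assms abs_Im_le_Re_if_Re_power2_nonneg by (intro mult_mono) auto
  thus ?thesis by (simp add: abs_le_iff)
qed

lemma Re_power2_mult_cnj_le: "Re (a\<^sup>2 * cnj (b\<^sup>2)) \<le> (Re (a * cnj b))\<^sup>2"
proof -
  have "a\<^sup>2 * cnj (b\<^sup>2) = (a * cnj b)\<^sup>2" by (simp add: power_mult_distrib)
  thus ?thesis by (simp add: Re_power2)
qed

lemma norm_diff_power2_le_if_Re_power2_ge:
  assumes r: "0 < r" "r \<le> Re (a\<^sup>2)" "r \<le> Re (b\<^sup>2)"
  shows "(cmod a - cmod b)\<^sup>2 \<le> (cmod (a\<^sup>2 - b\<^sup>2))\<^sup>2 / (4 * r)"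
proof -
  have ra: "r \<le> (cmod a)\<^sup>2" and rb: "r \<le> (cmod b)\<^sup>2"
    using r complex_Re_le_cmod order_trans by (metis norm_power)+
  have "r\<^sup>2 \<le> (cmod a * cmod b)\<^sup>2"
    using mult_mono[OF ra rb] r by (simp add: power_mult_distrib power2_eq_square[of r])
  hence "r \<le> cmod a * cmod b" by (rule power2_le_imp_le) simp
  hence sum: "4 * r \<le> (cmod a + cmod b)\<^sup>2" using ra rb by (simp add: power2_eq_square algebra_simps)
  have "(cmod a - cmod b)\<^sup>2 * (4 * r) \<le> (cmod a - cmod b)\<^sup>2 * (cmod a + cmod b)\<^sup>2"
    using sum by (intro mult_left_mono) simp_all
  also have "\<dots> = (cmod (a\<^sup>2) - cmod (b\<^sup>2))\<^sup>2"
    unfolding norm_power by (simp add: power2_eq_square algebra_simps)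
  also have "\<dots> \<le> (cmod (a\<^sup>2 - b\<^sup>2))\<^sup>2"
    using norm_triangle_ineq3[of "a\<^sup>2" "b\<^sup>2"] abs_le_square_iff[of "cmod (a\<^sup>2) - cmod (b\<^sup>2)" "cmod (a\<^sup>2 - b\<^sup>2)"]
    by simp
  finally show ?thesis using r by (simp add: pos_le_divide_eq)
qed

lemma unit_disk_parallelogram:
  assumes "cmod d \<le> 1" "cmod e \<le> 1"
  shows "(cmod (d - e))\<^sup>2 \<le> 4 - (cmod (d + e))\<^sup>2"
    and "(cmod (d + e))\<^sup>2 - 2 \<le> 2 * Re (d * cnj e)"
proof -
  have "(cmod d)\<^sup>2 \<le> 1" "(cmod e)\<^sup>2 \<le> 1" using assms by (simp_all add: power_le_one)
  thus "(cmod (d - e))\<^sup>2 \<le> 4 - (cmod (d + e))\<^sup>2" "(cmod (d + e))\<^sup>2 - 2 \<le> 2 * Re (d * cnj e)"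
    unfolding cmod_add_power2 cmod_diff_power2 by linarith+
qed

lemma Re_mult_cnj_segment_ge:
  fixes d e :: complex and k :: real
  assumes "cmod d \<le> 1" "cmod e \<le> 1" "0 \<le> k"
  shows "1 - k * cmod (d + e) + k\<^sup>2 * ((cmod (d + e))\<^sup>2 / 2 - 1)
    \<le> Re ((1 - of_real k * d) * cnj (1 - of_real k * e))"
proof -
  have "Re ((1 - of_real k * d) * cnj (1 - of_real k * e)) = 1 - k * Re (d + e) + k\<^sup>2 * Re (d * cnj e)"
    by (simp add: power2_eq_square algebra_simps)
  moreover have "k * Re (d + e) \<le> k * cmod (d + e)"
    by (intro mult_left_mono complex_Re_le_cmod assms(3))
  moreover have "k\<^sup>2 * ((cmod (d + e))\<^sup>2 / 2 - 1) \<le> k\<^sup>2 * Re (d * cnj e)"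
    using unit_disk_parallelogram(2)[OF assms(1,2)] by (intro mult_left_mono) auto
  ultimately show ?thesis by linarith
qed

lemma segment_root_estimate:
  fixes a b d e :: complex and p :: real
  assumes d: "cmod d \<le> 1" and e: "cmod e \<le> 1" and p: "0 \<le> p" "p \<le> 1"
    and a: "0 \<le> Re a" "a\<^sup>2 = 1 - of_real (2*p*(1-p)) * d"
    and b: "0 \<le> Re b" "b\<^sup>2 = 1 - of_real (2*p*(1-p)) * e"
  shows "(cmod (a - b))\<^sup>2 + 2*p\<^sup>2 \<le> 2 * cmod a * cmod b"
proof -
  define k where "k = 2*p*(1-p)"
  define g where "g = cmod (d + e) / 2"
  have "1/2 - k = 2 * (p - 1/2)\<^sup>2" unfolding k_def by (simp add: power2_eq_square algebra_simps)
  hence "k \<le> 1/2" using zero_le_power2[of "p - 1/2"] by linarith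
  moreover have "0 \<le> k" unfolding k_def using p by simp
  ultimately have k: "0 \<le> k" "k \<le> 1/2" by simp_all
  have g: "0 \<le> g" "g \<le> 1" unfolding g_def using norm_triangle_ineq[of d e] d e by auto
  have Re_ab: "1 - k \<le> Re (a\<^sup>2)" "1 - k \<le> Re (b\<^sup>2)"
    using a b k d e complex_Re_le_cmod[of d] complex_Re_le_cmod[of e]
    unfolding k_def[symmetric] by (auto intro: mult_left_le)
  hence "(cmod a - cmod b)\<^sup>2 \<le> (cmod (a\<^sup>2 - b\<^sup>2))\<^sup>2 / (4 * (1 - k))"
    using k by (intro norm_diff_power2_le_if_Re_power2_ge) auto
  moreover have "(cmod (a\<^sup>2 - b\<^sup>2))\<^sup>2 = k\<^sup>2 * (cmod (d - e))\<^sup>2"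
    unfolding a b k_def[symmetric] using k
    by (simp add: right_diff_distrib[symmetric] norm_mult power_mult_distrib norm_minus_commute)
  moreover have "k\<^sup>2 * (cmod (d - e))\<^sup>2 \<le> k\<^sup>2 * (4 - 4 * g\<^sup>2)"
    using unit_disk_parallelogram(1)[OF d e] unfolding g_def by (intro mult_left_mono) (auto simp: power_divide)
  ultimately have diff: "(cmod a - cmod b)\<^sup>2 \<le> k\<^sup>2 * (1 - g\<^sup>2) / (1 - k)"
    using k by (simp add: field_simps)
  define S where "S = Re (a * cnj b)"
  have S0: "0 \<le> S" unfolding S_def using a(1) b(1) Re_ab k
    by (intro Re_mult_cnj_nonneg_if_Re_power2_nonneg) auto
  define M where "M = (cmod a - cmod b)\<^sup>2 + 2*p\<^sup>2"
  have "M\<^sup>2 \<le> (2*p\<^sup>2 + k\<^sup>2 * (1 - g\<^sup>2) / (1 - k))\<^sup>2"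
    unfolding M_def using diff by (intro power_mono) auto
  also have "\<dots> \<le> 4 * (1 - 2*k*g + k\<^sup>2 * (2*g\<^sup>2 - 1))"
    using segment_weight_inequality[OF p g] unfolding k_def .
  also have "\<dots> \<le> 4 * Re (a\<^sup>2 * cnj (b\<^sup>2))"
    using Re_mult_cnj_segment_ge[OF d e k(1)] unfolding a b g_def k_def[symmetric]
    by (simp add: power_divide)
  also have "\<dots> \<le> 4 * S\<^sup>2" unfolding S_def using Re_power2_mult_cnj_le[of a b] by linarith
  also have "\<dots> = (2 * S)\<^sup>2" by (simp add: power2_eq_square)
  finally have "M \<le> 2 * S" by (rule power2_le_imp_le) (use S0 in simp)
  moreover have "(cmod (a - b))\<^sup>2 + 2*p\<^sup>2 = M + 2 * cmod a * cmod b - 2 * S"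
    unfolding M_def S_def cmod_diff_power2 power2_diff by linarith
  ultimately show ?thesis by linarith
qed

lemma Re_segment_weight_pos:
  fixes u :: complex and t :: real
  assumes "cmod (u - 1) < 1" "0 \<le> t" "t \<le> 1"
  shows "0 < Re (1 - of_real (2*t*(1-t)) * (1 - u))"
proof -
  have "Re (1 - u) < 1" using complex_Re_le_cmod[of "1 - u"] assms(1) by (simp add: norm_minus_commute)
  moreover have "2*t*(1-t) \<le> 1" using zero_le_power2[of "2*t - 1"] by (simp add: power2_eq_square algebra_simps)
  moreover have "0 \<le> 2*t*(1-t)" using assms(2,3) by simp
  ultimately have "2*t*(1-t) * Re (1 - u) < 1"
    by (smt (verit) mult_left_le mult_strict_left_mono)
  thus ?thesis by simp
qed

lemma normalized_segment_product_in_disk: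
  fixes u v w :: complex and p :: real
  assumes u: "cmod (u - 1) < 1" and v: "cmod (v - 1) < 1" and w: "cmod (w - 1) < 1"
    and p: "0 \<le> p" "p \<le> 1"
  defines "A \<equiv> 1 - of_real (2*p*(1-p)) * (1 - u)" and "B \<equiv> 1 - of_real (2*p*(1-p)) * (1 - v)"
  shows "cmod (((A + B) / 2 - of_real (p\<^sup>2) * (1 - w)) / (csqrt A * csqrt B) - 1) < 1"
proof -
  define a where "a = csqrt A"
  define b where "b = csqrt B"
  define C where "C = (A + B) / 2 - of_real (p\<^sup>2) * (1 - w)"
  have "cmod (1 - u) \<le> 1" "cmod (1 - v) \<le> 1" using u v by (simp_all add: norm_minus_commute)
  from segment_root_estimate[OF this p Re_csqrt power2_csqrt Re_csqrt power2_csqrt]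
  have est: "(cmod (a - b))\<^sup>2 + 2*p\<^sup>2 \<le> 2 * cmod a * cmod b"
    unfolding a_def b_def A_def B_def .
  have "a\<^sup>2 = A" "b\<^sup>2 = B" unfolding a_def b_def by simp_all
  hence "2 * (C - a*b) = (a - b)\<^sup>2 - 2 * of_real (p\<^sup>2) * (1 - w)"
    unfolding C_def by (simp add: power2_eq_square algebra_simps)
  hence "2 * cmod (C - a*b) = cmod ((a - b)\<^sup>2 - 2 * of_real (p\<^sup>2) * (1 - w))"
    by (metis norm_mult norm_numeral)
  also have "\<dots> \<le> cmod ((a - b)\<^sup>2) + cmod (2 * of_real (p\<^sup>2) * (1 - w))"
    by (rule norm_triangle_ineq4)
  finally have bound: "2 * cmod (C - a*b) \<le> (cmod (a - b))\<^sup>2 + 2 * p\<^sup>2 * cmod (1 - w)"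
    by (simp add: norm_mult norm_power)
  have lt: "cmod (C - a*b) < cmod (a*b)"
  proof (cases "p = 0")
    case True
    thus ?thesis unfolding a_def b_def C_def A_def B_def by simp
  next
    case False
    hence "p\<^sup>2 * cmod (1 - w) < p\<^sup>2" using w by (simp add: norm_minus_commute)
    thus ?thesis using est bound by (simp add: norm_mult)
  qed
  hence "a * b \<noteq> 0" by auto
  hence "C / (a*b) - 1 = (C - a*b) / (a*b)" by (simp add: field_simps)
  hence "cmod (C / (a*b) - 1) = cmod (C - a*b) / cmod (a*b)" by (simp add: norm_divide)
  also have "\<dots> < 1" using lt le_less_trans[OF norm_ge_zero lt] by (subst divide_less_eq_1_pos) auto
  finally show ?thesis unfolding C_def a_def b_def .
qed

lemma bform_commute: "bform z w = bform w z"
  unfolding bform_def by (simp add: mult.commute)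

lemma bform_linepath:
  "bform (linepath x y t) (linepath x' y' t) =
     of_real ((1-t)\<^sup>2) * bform x x' + of_real ((1-t)*t) * (bform x y' + bform y x') + of_real (t\<^sup>2) * bform y y'"
  unfolding bform_def linepath_def vector_add_component vector_scaleR_component
    sum_distrib_left sum.distrib [symmetric]
  by (rule sum.cong) (simp_all add: scaleR_conv_of_real power2_eq_square algebra_simps)

lemma bform_linepath_Qset:
  assumes "b \<in> Qset"
  shows "bform (linepath b x t) (linepath b y t) =
    ((1 - of_real (2*t*(1-t)) * (1 - bform x b)) + (1 - of_real (2*t*(1-t)) * (1 - bform y b))) / 2
      - of_real (t\<^sup>2) * (1 - bform x y)"
  using assms unfolding bform_linepath Qset_def bform_commute [of b y]
  by (simp add: power2_eq_square field_simps)

definition Q_normalize :: "complex ^ 'n \<Rightarrow> complex ^ 'n" where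
  "Q_normalize z = (\<chi> i. z $ i / csqrt (bform z z))"

lemma bform_Q_normalize:
  "bform (Q_normalize z) (Q_normalize w) = bform z w / (csqrt (bform z z) * csqrt (bform w w))"
  unfolding Q_normalize_def bform_def by (simp add: sum_divide_distrib)

lemma Q_normalize_in_Qset: "bform z z \<noteq> 0 \<Longrightarrow> Q_normalize z \<in> Qset"
  unfolding Qset_def using bform_Q_normalize [of z z] by (simp flip: power2_eq_square)

lemma Q_normalize_Qset: "z \<in> Qset \<Longrightarrow> Q_normalize z = z"
  unfolding Q_normalize_def Qset_def by (simp add: vec_eq_iff)

lemma continuous_on_Q_normalize:
  assumes "continuous_on S f" "\<And>t. t \<in> S \<Longrightarrow> 0 < Re (bform (f t) (f t))"
  shows "continuous_on S (\<lambda>t. Q_normalize (f t))"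
proof -
  have "continuous_on S (\<lambda>t. bform (f t) (f t))"
    unfolding bform_def using assms(1) by (intro continuous_intros)
  moreover have "(\<lambda>t. bform (f t) (f t)) ` S \<subseteq> - \<real>\<^sub>\<le>\<^sub>0"
  proof (rule image_subsetI)
    fix t assume "t \<in> S"
    from assms(2) [OF this] show "bform (f t) (f t) \<in> - \<real>\<^sub>\<le>\<^sub>0"
      by (auto simp: complex_nonpos_Reals_iff)
  qed
  ultimately have "continuous_on S (\<lambda>t. csqrt (bform (f t) (f t)))"
    by (rule continuous_on_compose2 [OF continuous_on_csqrt])
  moreover have "csqrt (bform (f t) (f t)) \<noteq> 0" if "t \<in> S" for t
    using assms(2) [OF that] by auto
  ultimately show ?thesis
    unfolding Q_normalize_def using assms(1) by (intro continuous_intros) auto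
qed

lemma path_component_OmegaT_diagonal:
  assumes "a \<in> OmegaT"
  shows "path_component OmegaT (\<chi> j. a $ j0) a"
proof -
  define b where "b = a $ j0"
  have aQ: "a $ j \<in> Qset" and aD: "cmod (bform (a $ j) (a $ k) - 1) < 1" for j k
    using assms unfolding OmegaT_def by auto
  have bQ: "b \<in> Qset" unfolding b_def by (rule aQ)
  define A where "A t j = 1 - of_real (2*t*(1-t)) * (1 - bform (a $ j) b)" for t j
  have bform_seg: "bform (linepath b (a $ j) t) (linepath b (a $ k) t)
      = (A t j + A t k) / 2 - of_real (t\<^sup>2) * (1 - bform (a $ j) (a $ k))" for t j k
    unfolding A_def by (rule bform_linepath_Qset [OF bQ])
  have A_self: "bform (linepath b (a $ j) t) (linepath b (a $ j) t) = A t j" for t j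
    using bform_seg [of j t j] aQ [of j] unfolding Qset_def by simp
  have A_pos: "0 < Re (A t j)" if "t \<in> {0..1}" for t j
    unfolding A_def using that aD [of j j0] by (intro Re_segment_weight_pos) (auto simp: b_def)
  define g where "g t = (\<chi> j. Q_normalize (linepath b (a $ j) t))" for t
  have "path g"
    unfolding path_def g_def using A_pos A_self
    by (intro continuous_on_vec_lambda continuous_on_Q_normalize continuous_on_linepath) auto
  moreover have "pathstart g = (\<chi> j. a $ j0)" "pathfinish g = a"
    unfolding pathstart_def pathfinish_def g_def b_def
    by (simp_all add: linepath_0' linepath_1' Q_normalize_Qset [OF aQ])
  moreover have "g t \<in> OmegaT" if t: "t \<in> {0..1}" for t
  proof -
    have "g t $ j \<in> Qset" for j
      unfolding g_def using A_pos [OF t, of j] A_self by (auto intro!: Q_normalize_in_Qset)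
    moreover have "cmod (bform (g t $ j) (g t $ k) - 1) < 1" for j k
    proof -
      have "bform (g t $ j) (g t $ k) = ((A t j + A t k) / 2 - of_real (t\<^sup>2) * (1 - bform (a $ j) (a $ k)))
          / (csqrt (A t j) * csqrt (A t k))"
        unfolding g_def vec_lambda_beta bform_Q_normalize A_self bform_seg ..
      thus ?thesis
        using normalized_segment_product_in_disk [OF aD [of j j0] aD [of k j0] aD [of j k]] t
        unfolding A_def b_def by auto
    qed
    ultimately show ?thesis unfolding OmegaT_def by auto
  qed
  ultimately show ?thesis unfolding path_component_def path_image_def by blast
qed

lemma path_component_Qset_real_sphere:
  assumes "c \<in> Qset"
  shows "\<exists>u :: real ^ 'n. norm u = 1 \<and> path_component Qset (\<chi> i. of_real (u $ i)) c"
proof -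
  define X where "X = (\<Sum>i\<in>UNIV. (Re (c $ i))\<^sup>2)"
  define Y where "Y = (\<Sum>i\<in>UNIV. (Im (c $ i))\<^sup>2)"
  define Z where "Z = (\<Sum>i\<in>UNIV. Re (c $ i) * Im (c $ i))"
  have "Re (bform c c) = X - Y" "Im (bform c c) = 2 * Z"
    unfolding bform_def X_def Y_def Z_def
    by (simp_all add: Re_sum Im_sum sum_subtractf [symmetric] sum_distrib_left power2_eq_square algebra_simps)
  hence XY: "X = 1 + Y" and Z0: "Z = 0" using assms unfolding Qset_def by simp_all
  have Y0: "0 \<le> Y" unfolding Y_def by (simp add: sum_nonneg)
  hence X0: "0 < X" using XY by simp
  define scale where "scale t = sqrt (1 + t\<^sup>2 * Y) / sqrt X" for t :: real
  define h where "h t = (\<chi> i. of_real (scale t * Re (c $ i)) + \<i> * of_real (t * Im (c $ i)))" for t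
  define u where "u = (\<chi> i. Re (c $ i) / sqrt X)"
  have "u \<bullet> u = (\<Sum>i\<in>UNIV. (Re (c $ i))\<^sup>2 / X)" unfolding u_def inner_vec_def
    using X0 by (intro sum.cong) (simp_all add: power2_eq_square)
  also have "\<dots> = 1" unfolding sum_divide_distrib [symmetric] X_def [symmetric] using X0 by simp
  finally have "norm u = 1" by (simp add: norm_eq_sqrt_inner)
  moreover have "h 0 = (\<chi> i. of_real (u $ i))" unfolding h_def scale_def u_def by (simp add: vec_eq_iff)
  moreover have "h 1 = c" unfolding h_def scale_def XY using Y0 by (simp add: vec_eq_iff complex_eq_iff)
  moreover have "h t \<in> Qset" for t
  proof -
    have "(scale t)\<^sup>2 * X = 1 + t\<^sup>2 * Y" unfolding scale_def using X0 Y0 by (simp add: power_divide)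
    moreover have "Re (bform (h t) (h t)) = (scale t)\<^sup>2 * X - t\<^sup>2 * Y"
      "Im (bform (h t) (h t)) = 2 * scale t * t * Z"
      unfolding bform_def h_def X_def Y_def Z_def
      by (simp_all add: Re_sum Im_sum sum_subtractf [symmetric] sum_distrib_left power2_eq_square algebra_simps)
    ultimately show ?thesis unfolding Qset_def using Z0 by (simp add: complex_eq_iff)
  qed
  moreover have "continuous_on {0..1} h"
    unfolding h_def scale_def by (intro continuous_intros) (use X0 in auto)
  ultimately show ?thesis
    unfolding path_component_def path_def pathstart_def pathfinish_def path_image_def by blast
qed

lemma path_connected_Qset:
  assumes "CARD('n) \<ge> 2"
  shows "path_connected (Qset :: (complex ^ 'n) set)"
  unfolding path_connected_component
proof (intro ballI)
  fix c c' :: "complex ^ 'n"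
  assume "c \<in> Qset" "c' \<in> Qset"
  then obtain u u' where u: "norm u = 1" "path_component Qset (\<chi> i. of_real (u $ i)) c"
    and u': "norm u' = 1" "path_component Qset (\<chi> i. of_real (u' $ i)) c'"
    using path_component_Qset_real_sphere by metis
  define S where "S = (\<lambda>v :: real ^ 'n. \<chi> i. complex_of_real (v $ i)) ` sphere 0 1"
  have "path_connected S"
    unfolding S_def using assms
    by (intro path_connected_continuous_image continuous_intros) (simp add: path_connected_sphere_eq)
  moreover have "S \<subseteq> Qset"
  proof
    fix z assume "z \<in> S"
    then obtain v :: "real ^ 'n" where v: "norm v = 1" "z = (\<chi> i. of_real (v $ i))"
      unfolding S_def by auto
    hence "bform z z = of_real (v \<bullet> v)" unfolding bform_def inner_vec_def by simp
    thus "z \<in> Qset" using v(1) unfolding Qset_def by (simp add: dot_square_norm)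
  qed
  moreover have "(\<chi> i. of_real (u $ i)) \<in> S" "(\<chi> i. of_real (u' $ i)) \<in> S"
    unfolding S_def using u(1) u'(1) by auto
  ultimately have "path_component Qset (\<chi> i. of_real (u $ i)) (\<chi> i. of_real (u' $ i))"
    unfolding path_connected_component by (meson path_component_of_subset)
  thus "path_component Qset c c'"
    using u(2) u'(2) by (meson path_component_sym path_component_trans)
qed

theorem lemma3:
  assumes "CARD('n) \<ge> 2"
    and "CARD('m) = CARD('n) + 1"
  shows "path_connected (OmegaT :: ((complex ^ 'n) ^ 'm) set)"
  unfolding path_connected_component
proof (intro ballI)
  fix a a' :: "(complex ^ 'n) ^ 'm"
  assume a: "a \<in> OmegaT" and a': "a' \<in> OmegaT"
  define diag where "diag x = (\<chi> j :: 'm. x)" for x :: "complex ^ 'n"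
  have "diag ` Qset \<subseteq> OmegaT" unfolding diag_def OmegaT_def Qset_def by auto
  moreover have "path_connected (diag ` Qset)" unfolding diag_def
    by (intro path_connected_continuous_image continuous_intros path_connected_Qset assms(1))
  moreover have "a $ j \<in> Qset" "a' $ j \<in> Qset" for j using a a' unfolding OmegaT_def by auto
  ultimately have "path_component OmegaT (diag (a $ j)) (diag (a' $ j))" for j
    unfolding path_connected_component by (meson image_eqI path_component_of_subset)
  with path_component_OmegaT_diagonal [OF a] path_component_OmegaT_diagonal [OF a']
  show "path_component OmegaT a a'"
    unfolding diag_def by (meson path_component_sym path_component_trans)
qed

end
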